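(* Let $X=\{0,1\}^{\mathbb Z}$, $\mu=(\tfrac12,\tfrac12)^{\mathbb Z}$, $T$ the two-sided shift, and $d(x,x')=\sum_{k\in\mathbb Z}2^{-|k|-2}|x_k-x'_k|$; let $\mathbf X=(X,d,\mu,T)$. With the finite array cubes equipped with the coordinate Euclidean metrics, for every $m\ge1$ and every $p\ge1$, \[\mathrm{Dep}_{2,m,p}(\mathbf X,\mathbf X)\ge\frac{5}{144\sqrt2}.\]
   Context: For a compact metric measure-preserving system $(X,d,\mu,T)$ paired with itself, $\mathcal J(T,T)$ is the set of Borel probability measures on $X\times X$ with both marginals $\mu$ invariant under $T\times T$. For $z_i=(x_i,y_i)$, $\mathcal D^X_{n,m}=(d(T^ax_i,T^bx_j))_{1\le i,j\le n,0\le a,b<m}$, $\mathcal D^Y_{n,m}=(d(T^ay_i,T^by_j))_{1\le i,j\le n,0\le a,b<m}$, $\Phi_{n,m}(\lambda)=\mathrm{Law}_{\lambda^{\otimes n}}(\mathcal D^X_{n,m},\mathcal D^Y_{n,m})$. $W_p$ is the $p$-Wasserstein distance on the finite array cube and $\mathrm{Dep}_{n,m,p}(\mathbf X,\mathbf X)=\sup_{\lambda\in\mathcal J(T,T)}W_p(\Phi_{n,m}(\lambda),\Phi_{n,m}(\mu\otimes\mu))$. *)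

theory Defs
  imports "HOL-Probability.Probability"
begin

definition joinings :: "'a measure \<Rightarrow> ('a \<Rightarrow> 'a) \<Rightarrow> ('a \<times> 'a) measure set" where
  "joinings \<mu> T = {L. sets L = sets (\<mu> \<Otimes>\<^sub>M \<mu>) \<and> prob_space L
      \<and> distr L \<mu> fst = \<mu> \<and> distr L \<mu> snd = \<mu>
      \<and> distr L L (\<lambda>(x, y). (T x, T y)) = L}"

text \<open>Coordinates of the pair of distance arrays (D^X, D^Y): a flag (False = X-array,
  True = Y-array) and indices (i,a,j,b) with 1 <= i,j <= n and 0 <= a,b < m.\<close>
type_synonym coord = "bool \<times> nat \<times> nat \<times> nat \<times> nat"

definition coords :: "nat \<Rightarrow> nat \<Rightarrow> coord set" where
  "coords n m = {(s, i, a, j, b). i \<in> {1..n} \<and> j \<in> {1..n} \<and> a < m \<and> b < m}"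

definition dist_arrays :: "('a \<Rightarrow> 'a \<Rightarrow> real) \<Rightarrow> ('a \<Rightarrow> 'a) \<Rightarrow> nat \<Rightarrow> nat
    \<Rightarrow> (nat \<Rightarrow> 'a \<times> 'a) \<Rightarrow> (coord \<Rightarrow> real)" where
  "dist_arrays d T n m z = restrict (\<lambda>(s, i, a, j, b).
      (let pr = (if s then snd else fst) in d ((T ^^ a) (pr (z i))) ((T ^^ b) (pr (z j)))))
      (coords n m)"

definition Phi :: "('a \<Rightarrow> 'a \<Rightarrow> real) \<Rightarrow> ('a \<Rightarrow> 'a) \<Rightarrow> nat \<Rightarrow> nat
    \<Rightarrow> ('a \<times> 'a) measure \<Rightarrow> (coord \<Rightarrow> real) measure" where
  "Phi d T n m L = distr (PiM {1..n} (\<lambda>_. L)) (PiM (coords n m) (\<lambda>_. borel)) (dist_arrays d T n m)"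

definition eucl_dist :: "'c set \<Rightarrow> ('c \<Rightarrow> real) \<Rightarrow> ('c \<Rightarrow> real) \<Rightarrow> real" where
  "eucl_dist I u v = sqrt (\<Sum>c\<in>I. (u c - v c)\<^sup>2)"

definition couplings :: "'b measure \<Rightarrow> 'b measure \<Rightarrow> ('b \<times> 'b) measure set" where
  "couplings P Q = {\<pi>. sets \<pi> = sets (P \<Otimes>\<^sub>M Q) \<and> prob_space \<pi>
      \<and> distr \<pi> P fst = P \<and> distr \<pi> Q snd = Q}"

definition wasserstein :: "'c set \<Rightarrow> real \<Rightarrow> ('c \<Rightarrow> real) measure \<Rightarrow> ('c \<Rightarrow> real) measure \<Rightarrow> real" where
  "wasserstein I p P Q =
     (enn2real (INF \<pi>\<in>couplings P Q. \<integral>\<^sup>+ w. ennreal (eucl_dist I (fst w) (snd w) powr p) \<partial>\<pi>)) powr (1 / p)"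

definition Dep :: "('a \<Rightarrow> 'a \<Rightarrow> real) \<Rightarrow> 'a measure \<Rightarrow> ('a \<Rightarrow> 'a) \<Rightarrow> nat \<Rightarrow> nat \<Rightarrow> real \<Rightarrow> ereal" where
  "Dep d \<mu> T n m p = (SUP L\<in>joinings \<mu> T.
      ereal (wasserstein (coords n m) p (Phi d T n m L) (Phi d T n m (\<mu> \<Otimes>\<^sub>M \<mu>))))"

definition bern_mu :: "(int \<Rightarrow> bool) measure" where
  "bern_mu = PiM UNIV (\<lambda>_::int. measure_pmf (bernoulli_pmf (1/2)))"

definition shift :: "(int \<Rightarrow> bool) \<Rightarrow> (int \<Rightarrow> bool)" where
  "shift x = (\<lambda>k. x (k + 1))"

definition bern_d :: "(int \<Rightarrow> bool) \<Rightarrow> (int \<Rightarrow> bool) \<Rightarrow> real" where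
  "bern_d x x' = (\<Sum>\<^sub>\<infinity>k\<in>UNIV. 2 powr (- real_of_int \<bar>k\<bar> - 2) * of_bool (x k \<noteq> x' k))"

end

theory Submission
  imports Defs
begin

text \<open>
  The supremum is bounded below by the diagonal joining \<lambda>, the image of \<mu> under x \<mapsto> (x, x).
  Under \<Phi>(\<lambda>) the two arrays coincide, so the entries d(x1, x2) of D^X and d(y1, y2) of D^Y
  agree almost surely. The functional u \<mapsto> |uX - uY| / sqrt 2 of these two entries is 1-Lipschitz
  for the Euclidean metric, so every coupling of \<Phi>(\<lambda>) with \<Phi>(\<mu> \<otimes> \<mu>) costs at least the
  p-th moment of t = |d(x1, x2) - d(y1, y2)| / sqrt 2 under (\<mu> \<otimes> \<mu>)^2. Flipping coordinate 0
  of x1 preserves this measure, fixes d(y1, y2) and moves d(x1, x2) by 1/4, so t and its value t'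
  after the flip satisfy t + t' \<ge> 1 / (4 sqrt 2); convexity of s \<mapsto> s^p then gives
  E t^p \<ge> (1 / (8 sqrt 2))^p. Hence W_p \<ge> 1 / (8 sqrt 2), which exceeds 5 / (144 sqrt 2).
\<close>

section \<open>The metric on the full shift\<close>

definition bern_weight :: "int \<Rightarrow> real" where
  "bern_weight k = 2 powr (- real_of_int \<bar>k\<bar> - 2)"

lemma bern_weight_nonneg [simp]: "0 \<le> bern_weight k"
  by (simp add: bern_weight_def)

lemma bern_weight_of_nat: "bern_weight (int n) = (1/2) ^ n / 4"
  by (simp add: bern_weight_def powr_diff powr_minus_divide powr_realpow power_one_over)

lemma bern_weight_neg: "bern_weight (- int (Suc n)) = (1/2) ^ n / 8"
  by (simp add: bern_weight_def powr_diff powr_minus_divide powr_realpow power_one_over)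

lemma has_sum_int_split:
  fixes f :: "int \<Rightarrow> real"
  assumes "\<And>k. 0 \<le> f k" and "summable (\<lambda>n. f (int n))" and "summable (\<lambda>n. f (- int (Suc n)))"
  shows "(f has_sum (\<Sum>n. f (int n)) + (\<Sum>n. f (- int (Suc n)))) UNIV"
proof -
  have pos: "(f has_sum (\<Sum>n. f (int n))) (range int)"
    using has_sum_reindex [of int UNIV f] sums_nonneg_imp_has_sum [OF summable_sums [OF assms(2)]]
    by (simp add: o_def assms(1))
  have neg: "(f has_sum (\<Sum>n. f (- int (Suc n)))) (range (\<lambda>n. - int (Suc n)))"
    using has_sum_reindex [of "\<lambda>n. - int (Suc n)" UNIV f]
      sums_nonneg_imp_has_sum [OF summable_sums [OF assms(3)]]
    by (simp add: o_def assms(1) inj_on_def)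
  have disjoint: "range int \<inter> range (\<lambda>n. - int (Suc n)) = {}"
    by auto
  have cover: "range int \<union> range (\<lambda>n. - int (Suc n)) = UNIV"
  proof -
    have "k \<in> range int \<union> range (\<lambda>n. - int (Suc n))" for k
      by (cases k rule: int_cases) auto
    then show ?thesis
      by auto
  qed
  from has_sum_Un_disjoint [OF pos neg disjoint] show ?thesis
    unfolding cover .
qed

lemma has_sum_bern_weight_dominated:
  assumes "\<And>k. 0 \<le> f k" and "\<And>k. f k \<le> bern_weight k"
  shows "(f has_sum (\<Sum>n. f (int n)) + (\<Sum>n. f (- int (Suc n)))) UNIV"
proof (rule has_sum_int_split [OF assms(1)])
  have geometric: "summable (\<lambda>n. (1/2::real) ^ n / c)" for c
    by (intro summable_divide summable_geometric) simp
  show "summable (\<lambda>n. f (int n))"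
    by (rule summable_comparison_test [OF _ geometric [of 4]])
       (use assms in \<open>simp add: bern_weight_of_nat [symmetric]\<close>)
  show "summable (\<lambda>n. f (- int (Suc n)))"
    by (rule summable_comparison_test [OF _ geometric [of 8]])
       (use assms in \<open>simp add: bern_weight_neg [symmetric]\<close>)
qed

lemma has_sum_bern_weight: "(bern_weight has_sum 3/4) UNIV"
proof -
  have "(\<Sum>n. (1/2::real) ^ n / c) = 2 / c" for c
    using suminf_divide [OF summable_geometric [of "1/2::real"], of c] suminf_geometric [of "1/2::real"]
    by simp
  then show ?thesis
    using has_sum_bern_weight_dominated [of bern_weight]
    by (simp only: bern_weight_of_nat bern_weight_neg) simp
qed

definition bern_d_term :: "(int \<Rightarrow> bool) \<Rightarrow> (int \<Rightarrow> bool) \<Rightarrow> int \<Rightarrow> real" where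
  "bern_d_term x y k = bern_weight k * of_bool (x k \<noteq> y k)"

lemma bern_d_term_nonneg: "0 \<le> bern_d_term x y k"
  and bern_d_term_le: "bern_d_term x y k \<le> bern_weight k"
  by (simp_all add: bern_d_term_def)

lemma has_sum_bern_d: "(bern_d_term x y has_sum bern_d x y) UNIV"
proof -
  have "bern_d_term x y summable_on UNIV"
    using has_sum_bern_weight_dominated [OF bern_d_term_nonneg bern_d_term_le]
    by (rule has_sum_imp_summable)
  moreover have "infsum (bern_d_term x y) UNIV = bern_d x y"
    unfolding bern_d_def bern_d_term_def [abs_def] bern_weight_def ..
  ultimately show ?thesis
    by (simp add: has_sum_iff)
qed

(* Measurability of bern_d is derived from this form: there is no measurability rule for infsum. *)
lemma bern_d_eq_suminf:
  "bern_d x y = (\<Sum>n. bern_d_term x y (int n)) + (\<Sum>n. bern_d_term x y (- int (Suc n)))"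
  using has_sum_bern_d has_sum_bern_weight_dominated [OF bern_d_term_nonneg bern_d_term_le]
  by (rule has_sum_unique)

lemma bern_d_nonneg: "0 \<le> bern_d x y"
  using has_sum_bern_d by (rule has_sum_nonneg) (rule bern_d_term_nonneg)

lemma bern_d_le: "bern_d x y \<le> 3/4"
  using has_sum_bern_d has_sum_bern_weight by (rule has_sum_mono) (rule bern_d_term_le)

definition flip_at :: "int \<Rightarrow> (int \<Rightarrow> bool) \<Rightarrow> int \<Rightarrow> bool" where
  "flip_at k x = x(k := \<not> x k)"

lemma bern_d_flip_at:
  "bern_d (flip_at k x) y = bern_d x y + (if x k = y k then bern_weight k else - bern_weight k)"
proof -
  let ?\<delta> = "if x k = y k then bern_weight k else - bern_weight k"
  have "((\<lambda>j. if j = k then ?\<delta> else 0) has_sum ?\<delta>) UNIV"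
    by (rule has_sum_finite_neutralI [of "{k}"]) auto
  from has_sum_add [OF has_sum_bern_d this]
  have "(bern_d_term (flip_at k x) y has_sum bern_d x y + ?\<delta>) UNIV"
    by (rule has_sum_cong [THEN iffD1, rotated]) (auto simp: bern_d_term_def flip_at_def)
  with has_sum_bern_d show ?thesis
    by (rule has_sum_unique)
qed

section \<open>The Bernoulli measure and its symmetries\<close>

abbreviation coin :: "bool measure" where
  "coin \<equiv> measure_pmf (bernoulli_pmf (1/2))"

lemma prob_space_bern_mu: "prob_space bern_mu"
  unfolding bern_mu_def by (rule prob_space_PiM) (rule prob_space_measure_pmf)

lemma measurable_coin_iff: "measurable N coin = measurable N (count_space UNIV)"
  by (rule measurable_cong_sets) auto

lemma measurable_bern_mu_component [measurable]:
  "(\<lambda>x. x k) \<in> measurable bern_mu (count_space UNIV)"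
  unfolding bern_mu_def measurable_coin_iff [symmetric]
  by (rule measurable_component_singleton) simp

lemma measurable_bern_d [measurable]:
  assumes "f \<in> measurable N bern_mu" and "g \<in> measurable N bern_mu"
  shows "(\<lambda>w. bern_d (f w) (g w)) \<in> borel_measurable N"
proof -
  have [measurable]: "(\<lambda>w. f w k) \<in> measurable N (count_space UNIV)"
    and [measurable]: "(\<lambda>w. g w k) \<in> measurable N (count_space UNIV)" for k
    using assms by (auto intro: measurable_compose [OF _ measurable_bern_mu_component])
  have [measurable]: "(\<lambda>w. bern_d_term (f w) (g w) k) \<in> borel_measurable N" for k
    unfolding bern_d_term_def by measurable
  show ?thesis
    unfolding bern_d_eq_suminf by measurable
qed

lemma measurable_bern_shift: "shift \<in> measurable bern_mu bern_mu"
proof -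
  have "(\<lambda>x. x (k + 1)) \<in> measurable bern_mu coin" for k
    unfolding bern_mu_def by (rule measurable_component_singleton) simp
  then show ?thesis
    unfolding bern_mu_def shift_def by (intro measurable_PiM_single') (auto simp: bern_mu_def)
qed

lemma distr_shift_bern_mu: "distr bern_mu bern_mu shift = bern_mu"
proof -
  have "shift = (\<lambda>x. \<lambda>k\<in>UNIV. x (k + 1))"
    by (simp add: shift_def [abs_def] restrict_UNIV)
  then show ?thesis
    using distr_PiM_reindex [of UNIV "\<lambda>_. coin" "\<lambda>k::int. k + 1" UNIV]
    by (simp add: bern_mu_def prob_space_measure_pmf inj_on_def)
qed

lemma measurable_flip_at: "flip_at k \<in> measurable bern_mu bern_mu"
proof -
  have "(\<lambda>x. if j = k then \<not> x j else x j) \<in> measurable bern_mu coin" for j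
    unfolding measurable_coin_iff by measurable
  moreover have "(\<lambda>x. flip_at k x j) = (\<lambda>x. if j = k then \<not> x j else x j)" for j
    by (auto simp: flip_at_def)
  ultimately have "(\<lambda>x. flip_at k x j) \<in> measurable bern_mu coin" for j
    by simp
  then show ?thesis
    unfolding bern_mu_def by (intro measurable_PiM_single') (auto simp: bern_mu_def space_PiM)
qed

lemma distr_flip_at_bern_mu: "distr bern_mu bern_mu (flip_at k) = bern_mu"
proof -
  interpret product_prob_space "\<lambda>_::int. coin" UNIV
    by (rule product_prob_spaceI) (rule prob_space_measure_pmf)
  have coin_Not: "emeasure coin (Not -` A) = emeasure coin A" for A
  proof -
    have "card (Not -` A) = card A"
      by (rule card_vimage_inj) (auto simp: inj_on_def)
    then show ?thesis
      by (simp add: measure_pmf_bernoulli_half emeasure_uniform_count_measure)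
  qed
  show ?thesis unfolding bern_mu_def
  proof (rule PiM_eq)
    fix J :: "int set" and F
    assume J: "finite J" "J \<subseteq> UNIV" and F: "\<And>j. j \<in> J \<Longrightarrow> F j \<in> sets coin"
    define F' where "F' j = (if j = k then Not -` F j else F j)" for j
    have "flip_at k -` prod_emb UNIV (\<lambda>_. coin) J (Pi\<^sub>E J F) \<inter> space (PiM UNIV (\<lambda>_. coin))
        = prod_emb UNIV (\<lambda>_. coin) J (Pi\<^sub>E J F')"
      by (auto simp: prod_emb_def PiE_iff F'_def flip_at_def space_PiM split: if_splits)
    then have "emeasure (distr (PiM UNIV (\<lambda>_. coin)) (PiM UNIV (\<lambda>_. coin)) (flip_at k))
          (prod_emb UNIV (\<lambda>_. coin) J (Pi\<^sub>E J F))
        = emeasure (PiM UNIV (\<lambda>_. coin)) (prod_emb UNIV (\<lambda>_. coin) J (Pi\<^sub>E J F'))"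
      using J F measurable_flip_at unfolding bern_mu_def
      by (subst emeasure_distr) (auto intro!: sets_PiM_I)
    also have "\<dots> = (\<Prod>j\<in>J. emeasure coin (F j))"
      using J by (subst emeasure_PiM_emb) (auto intro!: prod.cong simp: F'_def coin_Not)
    finally show "emeasure (distr (PiM UNIV (\<lambda>_. coin)) (PiM UNIV (\<lambda>_. coin)) (flip_at k))
        (prod_emb UNIV (\<lambda>_. coin) J (Pi\<^sub>E J F)) = (\<Prod>j\<in>J. emeasure coin (F j))" .
  qed simp
qed

lemma AE_diagonal_bern_mu:
  "AE w in distr bern_mu (bern_mu \<Otimes>\<^sub>M bern_mu) (\<lambda>x. (x, x)). fst w = snd w"
proof -
  have "Measurable.pred (bern_mu \<Otimes>\<^sub>M bern_mu) (\<lambda>w. \<forall>k. fst w k = snd w k)"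
    by measurable
  then have "{w \<in> space (bern_mu \<Otimes>\<^sub>M bern_mu). fst w = snd w} \<in> sets (bern_mu \<Otimes>\<^sub>M bern_mu)"
    by (simp add: pred_def fun_eq_iff)
  then show ?thesis
    by (subst AE_distr_iff) auto
qed

lemma distr_apfst_pair_measure:
  assumes "sigma_finite_measure N" and "f \<in> measurable M M" and "distr M M f = M"
  shows "distr (M \<Otimes>\<^sub>M N) (M \<Otimes>\<^sub>M N) (apfst f) = M \<Otimes>\<^sub>M N"
proof -
  have "distr M M f \<Otimes>\<^sub>M distr N N (\<lambda>y. y) = distr (M \<Otimes>\<^sub>M N) (M \<Otimes>\<^sub>M N) (\<lambda>(x, y). (f x, y))"
    using assms by (intro pair_measure_distr) (simp_all add: distr_id)
  then show ?thesis
    using assms(3) by (simp add: distr_id apfst_def map_prod_def)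
qed

lemma distr_PiM_componentwise:
  assumes "finite I" and "prob_space K"
    and g: "\<And>i. i \<in> I \<Longrightarrow> g i \<in> measurable K K" and "\<And>i. i \<in> I \<Longrightarrow> distr K K (g i) = K"
  shows "distr (PiM I (\<lambda>_. K)) (PiM I (\<lambda>_. K)) (\<lambda>z. \<lambda>i\<in>I. g i (z i)) = PiM I (\<lambda>_. K)"
proof -
  interpret product_prob_space "\<lambda>_. K" I
    by (rule product_prob_spaceI) (rule assms(2))
  have meas: "(\<lambda>z. \<lambda>i\<in>I. g i (z i)) \<in> measurable (PiM I (\<lambda>_. K)) (PiM I (\<lambda>_. K))"
    using g by (intro measurable_restrict) (auto intro: measurable_compose [OF measurable_component_singleton])
  show ?thesis
  proof (rule PiM_eqI [OF assms(1)])
    fix A assume A: "\<And>i. i \<in> I \<Longrightarrow> A i \<in> sets K"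
    have "(\<lambda>z. \<lambda>i\<in>I. g i (z i)) -` Pi\<^sub>E I A \<inter> space (PiM I (\<lambda>_. K))
        = Pi\<^sub>E I (\<lambda>i. g i -` A i \<inter> space K)"
      using g by (auto simp: space_PiM PiE_iff measurable_space)
    then have "emeasure (distr (PiM I (\<lambda>_. K)) (PiM I (\<lambda>_. K)) (\<lambda>z. \<lambda>i\<in>I. g i (z i))) (Pi\<^sub>E I A)
        = emeasure (PiM I (\<lambda>_. K)) (Pi\<^sub>E I (\<lambda>i. g i -` A i \<inter> space K))"
      using A meas by (subst emeasure_distr) (auto intro!: sets_PiM_I_finite assms(1))
    also have "\<dots> = (\<Prod>i\<in>I. emeasure K (g i -` A i \<inter> space K))"
      using A g assms(1) by (intro emeasure_PiM) (auto intro!: measurable_sets)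
    also have "\<dots> = (\<Prod>i\<in>I. emeasure K (A i))"
      using A g assms(4) by (intro prod.cong refl) (metis emeasure_distr)
    finally show "emeasure (distr (PiM I (\<lambda>_. K)) (PiM I (\<lambda>_. K)) (\<lambda>z. \<lambda>i\<in>I. g i (z i))) (Pi\<^sub>E I A)
        = (\<Prod>i\<in>I. emeasure K (A i))" .
  qed simp
qed

section \<open>Joinings, couplings and Wasserstein distances\<close>

lemma diagonal_in_joinings:
  assumes "prob_space M" and T: "T \<in> measurable M M" and "distr M M T = M"
  shows "distr M (M \<Otimes>\<^sub>M M) (\<lambda>x. (x, x)) \<in> joinings M T"
proof -
  let ?L = "distr M (M \<Otimes>\<^sub>M M) (\<lambda>x. (x, x))"
  have diag: "(\<lambda>x. (x, x)) \<in> measurable M (M \<Otimes>\<^sub>M M)"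
    by measurable
  have TT: "(\<lambda>(x, y). (T x, T y)) \<in> measurable (M \<Otimes>\<^sub>M M) (M \<Otimes>\<^sub>M M)"
    using T by measurable
  have "distr ?L M fst = M" and "distr ?L M snd = M"
    using diag by (simp_all add: distr_distr comp_def distr_id)
  moreover have "distr ?L ?L (\<lambda>(x, y). (T x, T y)) = ?L"
  proof -
    have "distr ?L ?L (\<lambda>(x, y). (T x, T y)) = distr M (M \<Otimes>\<^sub>M M) ((\<lambda>x. (x, x)) \<circ> T)"
      using diag TT by (simp add: distr_distr comp_def cong: distr_cong)
    also have "\<dots> = distr (distr M M T) (M \<Otimes>\<^sub>M M) (\<lambda>x. (x, x))"
      using diag T by (simp add: distr_distr)
    finally show ?thesis
      using assms(3) by simp
  qed
  ultimately show ?thesis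
    using assms(1) diag by (auto simp: joinings_def intro: prob_space.prob_space_distr)
qed

lemma pair_measure_in_couplings:
  assumes "prob_space P" and "prob_space Q"
  shows "P \<Otimes>\<^sub>M Q \<in> couplings P Q"
proof -
  interpret pair_prob_space P Q
    using assms by (simp add: pair_prob_space_def pair_sigma_finite_def prob_space_imp_sigma_finite)
  have "distr (P \<Otimes>\<^sub>M Q) Q snd = distr (distr (Q \<Otimes>\<^sub>M P) (P \<Otimes>\<^sub>M Q) (\<lambda>(x, y). (y, x))) Q snd"
    by (simp add: distr_pair_swap [symmetric])
  also have "\<dots> = distr (Q \<Otimes>\<^sub>M P) Q fst"
    by (subst distr_distr) (auto intro!: distr_cong)
  also have "\<dots> = Q"
    using prob_space.distr_pair_fst [OF assms(1)] .
  finally show ?thesis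
    using prob_space.distr_pair_fst [OF assms(2)] prob_space_pair [OF assms]
    by (simp add: couplings_def)
qed

lemma
  assumes "\<pi> \<in> couplings P Q"
  shows AE_couplings_fst: "AE u in P. A u \<Longrightarrow> AE w in \<pi>. A (fst w)"
    and AE_couplings_snd: "AE u in Q. A u \<Longrightarrow> AE w in \<pi>. A (snd w)"
proof -
  have sets: "sets \<pi> = sets (P \<Otimes>\<^sub>M Q)" and "distr \<pi> P fst = P" "distr \<pi> Q snd = Q"
    using assms by (auto simp: couplings_def)
  moreover have "fst \<in> measurable \<pi> P" and "snd \<in> measurable \<pi> Q"
    by (simp_all add: measurable_cong_sets [OF sets refl])
  ultimately show "AE u in P. A u \<Longrightarrow> AE w in \<pi>. A (fst w)"
    and "AE u in Q. A u \<Longrightarrow> AE w in \<pi>. A (snd w)"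
    by (metis AE_distrD)+
qed

lemma eucl_dist_nonneg: "0 \<le> eucl_dist I u v"
  by (simp add: eucl_dist_def sum_nonneg)

lemma eucl_dist_le_of_bounded:
  fixes B :: real
  assumes "finite I" and "\<forall>c\<in>I. \<bar>u c\<bar> \<le> B" and "\<forall>c\<in>I. \<bar>v c\<bar> \<le> B"
  shows "eucl_dist I u v \<le> sqrt (real (card I) * (2 * B)\<^sup>2)"
proof -
  have "(u c - v c)\<^sup>2 \<le> (2 * B)\<^sup>2" if "c \<in> I" for c
    using assms(2,3) that by (intro power2_le_iff_abs_le [THEN iffD2]) fastforce+
  then show ?thesis
    unfolding eucl_dist_def using sum_mono [of I "\<lambda>c. (u c - v c)\<^sup>2" "\<lambda>_. (2 * B)\<^sup>2"]
    by simp
qed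

lemma abs_coord_diff_lipschitz:
  assumes "finite I" and "c1 \<in> I" and "c2 \<in> I" and "c1 \<noteq> c2"
  shows "\<bar>\<bar>u c1 - u c2\<bar> - \<bar>v c1 - v c2\<bar>\<bar> \<le> sqrt 2 * eucl_dist I u v"
proof -
  define a b where "a = u c1 - v c1" and "b = u c2 - v c2"
  have "\<bar>\<bar>u c1 - u c2\<bar> - \<bar>v c1 - v c2\<bar>\<bar> \<le> \<bar>a\<bar> + \<bar>b\<bar>"
    by (simp add: a_def b_def)
  also have "\<dots> \<le> sqrt (2 * (a\<^sup>2 + b\<^sup>2))"
    using sum_squares_ge_zero [of "\<bar>a\<bar> - \<bar>b\<bar>" 0]
    by (intro real_le_rsqrt) (simp add: power2_eq_square algebra_simps)
  also have "a\<^sup>2 + b\<^sup>2 = (\<Sum>c\<in>{c1, c2}. (u c - v c)\<^sup>2)"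
    using assms(4) by (simp add: a_def b_def)
  also have "\<dots> \<le> (\<Sum>c\<in>I. (u c - v c)\<^sup>2)"
    using assms by (intro sum_mono2) auto
  finally show ?thesis
    by (simp add: eucl_dist_def real_sqrt_mult)
qed

(* The boundedness hypotheses only make the infimum finite: wasserstein is defined through
   enn2real, which sends \<infinity> to 0. *)
lemma wasserstein_ge:
  fixes P Q :: "('c \<Rightarrow> real) measure"
  assumes "finite I" and "prob_space P" and "prob_space Q"
    and "AE u in P. \<forall>c\<in>I. \<bar>u c\<bar> \<le> B" and "AE u in Q. \<forall>c\<in>I. \<bar>u c\<bar> \<le> B"
    and "0 \<le> r" and "0 < p"
    and cost: "\<And>\<pi>. \<pi> \<in> couplings P Q \<Longrightarrow>
      ennreal (r powr p) \<le> (\<integral>\<^sup>+ w. ennreal (eucl_dist I (fst w) (snd w) powr p) \<partial>\<pi>)"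
  shows "r \<le> wasserstein I p P Q"
proof -
  define C where "C = (INF \<pi>\<in>couplings P Q. \<integral>\<^sup>+ w. ennreal (eucl_dist I (fst w) (snd w) powr p) \<partial>\<pi>)"
  define E where "E = sqrt (real (card I) * (2 * B)\<^sup>2)"
  have product: "P \<Otimes>\<^sub>M Q \<in> couplings P Q"
    using assms(2,3) by (rule pair_measure_in_couplings)
  have "C \<le> (\<integral>\<^sup>+ w. ennreal (eucl_dist I (fst w) (snd w) powr p) \<partial>(P \<Otimes>\<^sub>M Q))"
    unfolding C_def using product by (rule INF_lower)
  also have "\<dots> \<le> (\<integral>\<^sup>+ w. ennreal (E powr p) \<partial>(P \<Otimes>\<^sub>M Q))"
    using AE_couplings_fst [OF product assms(4)] AE_couplings_snd [OF product assms(5)]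
  proof (intro nn_integral_mono_AE, eventually_elim)
    case (elim w)
    then have "eucl_dist I (fst w) (snd w) \<le> E"
      unfolding E_def using assms(1) by (intro eucl_dist_le_of_bounded)
    then show ?case
      using assms(7) by (intro ennreal_leI powr_mono2) (auto simp: eucl_dist_nonneg)
  qed
  also have "\<dots> = ennreal (E powr p)"
    using prob_space.emeasure_space_1 [OF prob_space_pair [OF assms(2,3)]] by simp
  finally have "C < \<infinity>"
    using le_less_trans by fastforce
  moreover have "ennreal (r powr p) \<le> C"
    unfolding C_def by (rule INF_greatest) (rule cost)
  ultimately have "r powr p \<le> enn2real C"
    using enn2real_mono by fastforce
  then have "(r powr p) powr (1 / p) \<le> enn2real C powr (1 / p)"
    using assms(7) by (intro powr_mono2) auto
  then show ?thesis
    using assms(6,7) by (simp add: wasserstein_def C_def powr_powr)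
qed

lemma coupling_cost_ge_of_lipschitz:
  assumes \<pi>: "\<pi> \<in> couplings P Q" and f: "f \<in> borel_measurable Q"
    and lip: "\<And>u v. \<bar>f u - f v\<bar> \<le> eucl_dist I u v" and nonneg: "\<And>u. 0 \<le> f u"
    and zero: "AE u in P. f u = 0" and "0 \<le> p"
  shows "(\<integral>\<^sup>+ u. ennreal (f u powr p) \<partial>Q) \<le> (\<integral>\<^sup>+ w. ennreal (eucl_dist I (fst w) (snd w) powr p) \<partial>\<pi>)"
proof -
  have sets: "sets \<pi> = sets (P \<Otimes>\<^sub>M Q)" and marginal: "distr \<pi> Q snd = Q"
    using \<pi> by (auto simp: couplings_def)
  have "snd \<in> measurable \<pi> Q"
    by (simp add: measurable_cong_sets [OF sets refl])
  then have "(\<integral>\<^sup>+ u. ennreal (f u powr p) \<partial>Q) = (\<integral>\<^sup>+ w. ennreal (f (snd w) powr p) \<partial>\<pi>)"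
    using f by (subst (1) marginal [symmetric]) (simp add: nn_integral_distr)
  also have "\<dots> \<le> (\<integral>\<^sup>+ w. ennreal (eucl_dist I (fst w) (snd w) powr p) \<partial>\<pi>)"
    using AE_couplings_fst [OF \<pi> zero]
  proof (intro nn_integral_mono_AE, eventually_elim)
    case (elim w)
    then have "f (snd w) \<le> eucl_dist I (fst w) (snd w)"
      using lip [of "fst w" "snd w"] by simp
    then show ?case
      using nonneg assms(6) by (intro ennreal_leI powr_mono2) auto
  qed
  finally show ?thesis .
qed

section \<open>Distance arrays\<close>

lemma finite_coords: "finite (coords n m)"
proof (rule finite_subset)
  show "coords n m \<subseteq> UNIV \<times> {1..n} \<times> {..<m} \<times> {1..n} \<times> {..<m}"
    by (auto simp: coords_def)
qed simp

lemma measurable_dist_arrays: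
  assumes K: "sets K = sets (M \<Otimes>\<^sub>M M)" and T: "T \<in> measurable M M"
    and d: "(\<lambda>(x, y). d x y) \<in> borel_measurable (M \<Otimes>\<^sub>M M)"
  shows "dist_arrays d T n m \<in> measurable (PiM {1..n} (\<lambda>_. K)) (PiM (coords n m) (\<lambda>_. borel))"
proof -
  have proj: "fst \<in> measurable K M" "snd \<in> measurable K M"
    by (simp_all add: measurable_cong_sets [OF K refl])
  have point: "(\<lambda>z. (T ^^ a) (pr (z i))) \<in> measurable (PiM I (\<lambda>_. K)) M"
    if "i \<in> I" and "pr \<in> measurable K M" for I i a pr
    using measurable_compose_n [OF T] that
    by (auto intro: measurable_compose [OF measurable_component_singleton])
  have entry: "(\<lambda>z. d (f z) (g z)) \<in> borel_measurable N"
    if "f \<in> measurable N M" and "g \<in> measurable N M" for f g N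
    using measurable_compose [OF measurable_Pair [OF that] d] by simp
  show ?thesis
    unfolding dist_arrays_def [abs_def]
  proof (rule measurable_restrict)
    fix c assume "c \<in> coords n m"
    then obtain s i a j b where c: "c = (s, i, a, j, b)" and ij: "i \<in> {1..n}" "j \<in> {1..n}"
      by (auto simp: coords_def)
    have "(\<lambda>z. d ((T ^^ a) (pr (z i))) ((T ^^ b) (pr (z j)))) \<in> borel_measurable (PiM {1..n} (\<lambda>_. K))"
      if "pr \<in> measurable K M" for pr
      using that ij by (intro entry point)
    with proj show "(\<lambda>z. case c of (s, i, a, j, b) \<Rightarrow>
        let pr = if s then snd else fst in d ((T ^^ a) (pr (z i))) ((T ^^ b) (pr (z j))))
      \<in> borel_measurable (PiM {1..n} (\<lambda>_. K))"
      unfolding c by (cases s) (simp_all add: Let_def)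
  qed
qed

lemma prob_space_Phi:
  assumes "prob_space K"
    and "dist_arrays d T n m \<in> measurable (PiM {1..n} (\<lambda>_. K)) (PiM (coords n m) (\<lambda>_. borel))"
  shows "prob_space (Phi d T n m K)"
  unfolding Phi_def using assms
  by (intro prob_space.prob_space_distr prob_space_PiM)

lemma AE_Phi_bounded:
  assumes "dist_arrays d T n m \<in> measurable (PiM {1..n} (\<lambda>_. K)) (PiM (coords n m) (\<lambda>_. borel))"
    and "\<And>x y. \<bar>d x y\<bar> \<le> B"
  shows "AE u in Phi d T n m K. \<forall>c\<in>coords n m. \<bar>u c\<bar> \<le> B"
proof -
  have "Measurable.pred (PiM (coords n m) (\<lambda>_. borel)) (\<lambda>u. \<forall>c\<in>coords n m. \<bar>u c\<bar> \<le> B)"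
    using finite_coords by measurable
  then show ?thesis
    unfolding Phi_def using assms
    by (subst AE_distr_iff) (auto simp: pred_def dist_arrays_def coords_def Let_def)
qed

lemma measurable_dist_arrays_bern:
  assumes "sets K = sets (bern_mu \<Otimes>\<^sub>M bern_mu)"
  shows "dist_arrays bern_d shift n m \<in> measurable (PiM {1..n} (\<lambda>_. K)) (PiM (coords n m) (\<lambda>_. borel))"
  using assms measurable_bern_shift by (rule measurable_dist_arrays) measurable

lemma AE_Phi_bern_bounded:
  assumes "sets K = sets (bern_mu \<Otimes>\<^sub>M bern_mu)"
  shows "AE u in Phi bern_d shift n m K. \<forall>c\<in>coords n m. \<bar>u c\<bar> \<le> 3/4"
  using measurable_dist_arrays_bern [OF assms]
  by (rule AE_Phi_bounded) (metis abs_of_nonneg bern_d_nonneg bern_d_le)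

section \<open>The diagonal joining against the product joining\<close>

lemma powr_midpoint_le:
  fixes a b c p :: real
  assumes "0 \<le> a" and "0 \<le> b" and "0 \<le> c" and "2 * c \<le> a + b" and "1 \<le> p"
  shows "2 * c powr p \<le> a powr p + b powr p"
proof -
  have "c powr p \<le> ((a + b) / 2) powr p"
    using assms by (intro powr_mono2) auto
  also have "\<dots> \<le> (a powr p + b powr p) / 2"
  proof (cases "a = 0 \<or> b = 0")
    case True \<comment> \<open>powr_convex only covers the open half-line\<close>
    have "(s / 2) powr p \<le> s powr p / 2" if "0 \<le> s" for s
    proof -
      have "(s / 2) powr p = s powr p / 2 powr p"
        using that by (simp add: powr_divide)
      also have "\<dots> \<le> s powr p / 2 powr 1"
        using assms(5) by (intro divide_left_mono powr_mono) auto
      finally show ?thesis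
        by simp
    qed
    then show ?thesis
      using True assms(1,2,5) by auto
  next
    case False
    then have "a \<in> {0<..}" and "b \<in> {0<..}"
      using assms(1,2) by auto
    from convex_onD [OF powr_convex [OF assms(5)], of "1/2", OF _ _ this]
    show ?thesis
      by (simp add: add_divide_distrib)
  qed
  finally show ?thesis
    by simp
qed

type_synonym samples = "nat \<Rightarrow> (int \<Rightarrow> bool) \<times> (int \<Rightarrow> bool)"

definition sample_gap :: "samples \<Rightarrow> real" where
  "sample_gap z = \<bar>bern_d (fst (z 1)) (fst (z 2)) - bern_d (snd (z 1)) (snd (z 2))\<bar>"

definition flip_x1 :: "samples \<Rightarrow> samples" where
  "flip_x1 z = (\<lambda>i\<in>{1..2}. if i = 1 then apfst (flip_at 0) (z i) else z i)"

lemma sample_gap_flip_x1: "1/4 \<le> sample_gap z + sample_gap (flip_x1 z)"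
proof -
  define t where "t = bern_d (fst (z 1)) (fst (z 2)) - bern_d (snd (z 1)) (snd (z 2))"
  define e :: real where "e = (if fst (z 1) 0 = fst (z 2) 0 then 1/4 else - 1/4)"
  have weight: "bern_weight 0 = 1/4"
    using bern_weight_of_nat [of 0] by simp
  have "sample_gap (flip_x1 z) = \<bar>t + e\<bar>"
    by (simp add: sample_gap_def flip_x1_def apfst_def bern_d_flip_at weight t_def e_def algebra_simps)
  moreover have "sample_gap z = \<bar>t\<bar>"
    by (simp add: sample_gap_def t_def)
  moreover have "\<bar>e\<bar> = 1/4"
    by (simp add: e_def)
  ultimately show ?thesis
    by arith
qed

abbreviation sample_space :: "samples measure" where
  "sample_space \<equiv> PiM {1..2} (\<lambda>_. bern_mu \<Otimes>\<^sub>M bern_mu)"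

lemma
  shows measurable_flip_x1: "flip_x1 \<in> measurable sample_space sample_space"
    and distr_flip_x1: "distr sample_space sample_space flip_x1 = sample_space"
proof -
  define g :: "nat \<Rightarrow> (int \<Rightarrow> bool) \<times> (int \<Rightarrow> bool) \<Rightarrow> (int \<Rightarrow> bool) \<times> (int \<Rightarrow> bool)"
    where "g i = (if i = 1 then apfst (flip_at 0) else id)" for i
  have flip_x1_eq: "flip_x1 = (\<lambda>z. \<lambda>i\<in>{1..2}. g i (z i))"
    by (auto simp: flip_x1_def g_def fun_eq_iff)
  have "apfst (flip_at 0) \<in> measurable (bern_mu \<Otimes>\<^sub>M bern_mu) (bern_mu \<Otimes>\<^sub>M bern_mu)"
    using measurable_flip_at by (simp add: apfst_def map_prod_def split_beta')
  then have g: "g i \<in> measurable (bern_mu \<Otimes>\<^sub>M bern_mu) (bern_mu \<Otimes>\<^sub>M bern_mu)" for i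
    by (simp add: g_def)
  then show "flip_x1 \<in> measurable sample_space sample_space"
    unfolding flip_x1_eq
    by (intro measurable_restrict) (auto intro: measurable_compose [OF measurable_component_singleton])
  have "distr (bern_mu \<Otimes>\<^sub>M bern_mu) (bern_mu \<Otimes>\<^sub>M bern_mu) (g i) = bern_mu \<Otimes>\<^sub>M bern_mu" for i
    using distr_apfst_pair_measure [OF prob_space_imp_sigma_finite [OF prob_space_bern_mu]
        measurable_flip_at distr_flip_at_bern_mu]
    by (simp add: g_def distr_id [unfolded id_def, folded id_def])
  with g show "distr sample_space sample_space flip_x1 = sample_space"
    unfolding flip_x1_eq
    by (intro distr_PiM_componentwise) (simp_all add: prob_space_pair prob_space_bern_mu)
qed

lemma nn_integral_sample_gap_ge:
  assumes "1 \<le> p"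
  shows "ennreal ((1 / (8 * sqrt 2)) powr p) \<le> (\<integral>\<^sup>+ z. ennreal ((sample_gap z / sqrt 2) powr p) \<partial>sample_space)"
proof -
  define c :: real where "c = 1 / (8 * sqrt 2)"
  define h where "h z = ennreal ((sample_gap z / sqrt 2) powr p)" for z
  have h: "h \<in> borel_measurable sample_space"
  proof -
    have [measurable]: "(\<lambda>z. z i) \<in> measurable sample_space (bern_mu \<Otimes>\<^sub>M bern_mu)" if "i \<in> {1..2}" for i
      using that by (rule measurable_component_singleton)
    show ?thesis
      unfolding h_def sample_gap_def by measurable
  qed
  have pointwise: "2 * ennreal (c powr p) \<le> h z + h (flip_x1 z)" for z
  proof -
    have "(1/4) / sqrt 2 \<le> (sample_gap z + sample_gap (flip_x1 z)) / sqrt 2"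
      using sample_gap_flip_x1 [of z] by (intro divide_right_mono) auto
    then have "2 * c \<le> sample_gap z / sqrt 2 + sample_gap (flip_x1 z) / sqrt 2"
      by (simp add: c_def add_divide_distrib)
    then have "2 * c powr p \<le> (sample_gap z / sqrt 2) powr p + (sample_gap (flip_x1 z) / sqrt 2) powr p"
      using assms by (intro powr_midpoint_le) (auto simp: c_def sample_gap_def)
    then have "ennreal (2 * c powr p)
        \<le> ennreal ((sample_gap z / sqrt 2) powr p + (sample_gap (flip_x1 z) / sqrt 2) powr p)"
      by (rule ennreal_leI)
    then show ?thesis
      by (simp add: h_def ennreal_mult)
  qed
  interpret sample: prob_space sample_space
    by (intro prob_space_PiM prob_space_pair prob_space_bern_mu)
  have "2 * ennreal (c powr p) = (\<integral>\<^sup>+ z. 2 * ennreal (c powr p) \<partial>sample_space)"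
    by (simp only: nn_integral_const sample.emeasure_space_1 mult_1_right)
  also have "\<dots> \<le> (\<integral>\<^sup>+ z. h z + h (flip_x1 z) \<partial>sample_space)"
    by (intro nn_integral_mono pointwise)
  also have "\<dots> = (\<integral>\<^sup>+ z. h z \<partial>sample_space) + (\<integral>\<^sup>+ z. h (flip_x1 z) \<partial>sample_space)"
    using h measurable_flip_x1 by (simp add: nn_integral_add)
  also have "(\<integral>\<^sup>+ z. h (flip_x1 z) \<partial>sample_space) = (\<integral>\<^sup>+ z. h z \<partial>distr sample_space sample_space flip_x1)"
    using measurable_flip_x1 h by (simp add: nn_integral_distr)
  also have "\<dots> = (\<integral>\<^sup>+ z. h z \<partial>sample_space)"
    unfolding distr_flip_x1 ..
  also have "(\<integral>\<^sup>+ z. h z \<partial>sample_space) + (\<integral>\<^sup>+ z. h z \<partial>sample_space) = 2 * (\<integral>\<^sup>+ z. h z \<partial>sample_space)"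
    by (simp add: mult_2)
  finally have "2 * ennreal (c powr p) \<le> 2 * (\<integral>\<^sup>+ z. h z \<partial>sample_space)" .
  then show ?thesis
    by (simp add: c_def h_def ennreal_mult_le_mult_iff)
qed

(* The two entries are d(x1, x2) in D^X and d(y1, y2) in D^Y, both at times a = b = 0. *)
definition array_gap :: "(coord \<Rightarrow> real) \<Rightarrow> real" where
  "array_gap u = \<bar>u (False, 1, 0, 2, 0) - u (True, 1, 0, 2, 0)\<bar> / sqrt 2"

lemma array_gap_coords:
  assumes "0 < m"
  shows "(False, 1, 0, 2, 0) \<in> coords 2 m" and "(True, 1, 0, 2, 0) \<in> coords 2 m"
  using assms by (simp_all add: coords_def)

lemma array_gap_dist_arrays:
  "0 < m \<Longrightarrow> array_gap (dist_arrays bern_d shift 2 m z) = sample_gap z / sqrt 2"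
  by (simp add: array_gap_def sample_gap_def dist_arrays_def coords_def)

lemma array_gap_lipschitz:
  assumes "0 < m"
  shows "\<bar>array_gap u - array_gap v\<bar> \<le> eucl_dist (coords 2 m) u v"
proof -
  have "\<bar>array_gap u - array_gap v\<bar>
      = \<bar>\<bar>u (False, 1, 0, 2, 0) - u (True, 1, 0, 2, 0)\<bar> - \<bar>v (False, 1, 0, 2, 0) - v (True, 1, 0, 2, 0)\<bar>\<bar> / sqrt 2"
    by (simp add: array_gap_def diff_divide_distrib [symmetric])
  also have "\<dots> \<le> eucl_dist (coords 2 m) u v"
    using abs_coord_diff_lipschitz [OF finite_coords array_gap_coords [OF assms]]
    by (simp add: divide_le_eq mult.commute)
  finally show ?thesis .
qed

lemma measurable_array_gap:
  assumes "0 < m"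
  shows "array_gap \<in> borel_measurable (PiM (coords 2 m) (\<lambda>_. borel))"
proof -
  have [measurable]: "(\<lambda>u. u c) \<in> borel_measurable (PiM (coords 2 m) (\<lambda>_. borel))" if "c \<in> coords 2 m" for c
    using that by (rule measurable_component_singleton)
  show ?thesis
    unfolding array_gap_def [abs_def] using array_gap_coords [OF assms] by measurable
qed

abbreviation bern_diagonal :: "((int \<Rightarrow> bool) \<times> (int \<Rightarrow> bool)) measure" where
  "bern_diagonal \<equiv> distr bern_mu (bern_mu \<Otimes>\<^sub>M bern_mu) (\<lambda>x. (x, x))"

lemma bern_diagonal_in_joinings: "bern_diagonal \<in> joinings bern_mu shift"
  using prob_space_bern_mu measurable_bern_shift distr_shift_bern_mu by (rule diagonal_in_joinings)

lemma prob_space_bern_diagonal: "prob_space bern_diagonal"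
  using bern_diagonal_in_joinings by (simp add: joinings_def)

lemma AE_array_gap_diagonal:
  assumes "0 < m"
  shows "AE u in Phi bern_d shift 2 m bern_diagonal. array_gap u = 0"
proof -
  have diag: "AE z in PiM {1..2} (\<lambda>_. bern_diagonal). fst (z i) = snd (z i)" if "i \<in> {1..2::nat}" for i
    using prob_space_bern_diagonal that AE_diagonal_bern_mu by (rule AE_PiM_component)
  have "1 \<in> {1..2::nat}" and "2 \<in> {1..2::nat}"
    by simp_all
  from diag [OF this(1)] diag [OF this(2)]
  have "AE z in PiM {1..2} (\<lambda>_. bern_diagonal). array_gap (dist_arrays bern_d shift 2 m z) = 0"
    by eventually_elim (simp add: array_gap_dist_arrays [OF assms] sample_gap_def)
  moreover have "Measurable.pred (PiM (coords 2 m) (\<lambda>_. borel)) (\<lambda>u. array_gap u = 0)"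
    using measurable_array_gap [OF assms] by measurable
  moreover have "dist_arrays bern_d shift 2 m
      \<in> measurable (PiM {1..2} (\<lambda>_. bern_diagonal)) (PiM (coords 2 m) (\<lambda>_. borel))"
    by (rule measurable_dist_arrays_bern) simp
  ultimately show ?thesis
    unfolding Phi_def by (subst AE_distr_iff) (auto simp: pred_def)
qed

lemma wasserstein_diagonal_product_ge:
  assumes "0 < m" and "1 \<le> p"
  shows "1 / (8 * sqrt 2) \<le> wasserstein (coords 2 m) p
    (Phi bern_d shift 2 m bern_diagonal) (Phi bern_d shift 2 m (bern_mu \<Otimes>\<^sub>M bern_mu))"
proof (rule wasserstein_ge [OF finite_coords _ _ AE_Phi_bern_bounded AE_Phi_bern_bounded])
  show "prob_space (Phi bern_d shift 2 m bern_diagonal)"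
    using prob_space_bern_diagonal measurable_dist_arrays_bern by (rule prob_space_Phi) simp
  show "prob_space (Phi bern_d shift 2 m (bern_mu \<Otimes>\<^sub>M bern_mu))"
    using prob_space_pair [OF prob_space_bern_mu prob_space_bern_mu] measurable_dist_arrays_bern
    by (rule prob_space_Phi) simp
  fix \<pi>
  assume \<pi>: "\<pi> \<in> couplings (Phi bern_d shift 2 m bern_diagonal)
    (Phi bern_d shift 2 m (bern_mu \<Otimes>\<^sub>M bern_mu))"
  have "ennreal ((1 / (8 * sqrt 2)) powr p)
      \<le> (\<integral>\<^sup>+ z. ennreal ((sample_gap z / sqrt 2) powr p) \<partial>sample_space)"
    using assms(2) by (rule nn_integral_sample_gap_ge)
  also have "\<dots> = (\<integral>\<^sup>+ u. ennreal (array_gap u powr p)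
      \<partial>Phi bern_d shift 2 m (bern_mu \<Otimes>\<^sub>M bern_mu))"
    unfolding Phi_def using measurable_dist_arrays_bern measurable_array_gap [OF assms(1)]
    by (subst nn_integral_distr) (auto simp: array_gap_dist_arrays [OF assms(1)])
  also have "\<dots> \<le> (\<integral>\<^sup>+ w. ennreal (eucl_dist (coords 2 m) (fst w) (snd w) powr p) \<partial>\<pi>)"
    using \<pi> _ array_gap_lipschitz [OF assms(1)] _ AE_array_gap_diagonal [OF assms(1)]
  proof (rule coupling_cost_ge_of_lipschitz)
    show "array_gap \<in> borel_measurable (Phi bern_d shift 2 m (bern_mu \<Otimes>\<^sub>M bern_mu))"
      using measurable_array_gap [OF assms(1)] by (simp add: Phi_def)
  qed (use assms(2) in \<open>auto simp: array_gap_def\<close>)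
  finally show "ennreal ((1 / (8 * sqrt 2)) powr p)
      \<le> (\<integral>\<^sup>+ w. ennreal (eucl_dist (coords 2 m) (fst w) (snd w) powr p) \<partial>\<pi>)" .
qed (use assms in auto)

theorem proposition18:
  fixes m :: nat and p :: real
  assumes "m \<ge> 1" and "p \<ge> 1"
  shows "Dep bern_d bern_mu shift 2 m p \<ge> ereal (5 / (144 * sqrt 2))"
proof -
  have "ereal (5 / (144 * sqrt 2)) \<le> ereal (1 / (8 * sqrt 2))"
    by (simp add: divide_simps)
  also have "\<dots> \<le> wasserstein (coords 2 m) p
      (Phi bern_d shift 2 m bern_diagonal) (Phi bern_d shift 2 m (bern_mu \<Otimes>\<^sub>M bern_mu))"
    using assms wasserstein_diagonal_product_ge by simp
  also have "\<dots> \<le> Dep bern_d bern_mu shift 2 m p"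
    unfolding Dep_def using bern_diagonal_in_joinings by (rule SUP_upper)
  finally show ?thesis .
qed

end
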